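(* If $\{T_i\}_{i=1}^M$ is an extremal quantum $1$-tester on $\mathcal H_2\otimes\mathcal H_1$ with normalization $I_2\otimes\rho$, $r=\operatorname{rank}\rho$ and $r_i=\operatorname{rank}T_i$, then $$\sum_{i=1}^Mr_i^2+r^2-1\le (r\,d_2)^2.$$ In particular the number of outcomes satisfies $M\le d_1^2(d_2^2-1)+1$ (assuming all $T_i\neq0$).
   Context: $d_k=\dim\mathcal H_k<\infty$. A quantum $1$-tester with $M$ outcomes is a family of positive operators $\{T_i\}_{i=1}^M$ on $\mathcal H_2\otimes\mathcal H_1$ with $\sum_iT_i=I_2\otimes\rho$ for a density operator $\rho$ on $\mathcal H_1$; extremal means an extreme point of the convex set of all such testers with $M$ outcomes. *)

theory Defs
  imports "HOL-Analysis.Analysis"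
begin

definition psd :: "complex^'n^'n \<Rightarrow> bool" where
  "psd A \<longleftrightarrow> (\<forall>v :: complex^'n.
      (\<Sum>i\<in>UNIV. \<Sum>j\<in>UNIV. cnj (v$i) * A$i$j * v$j) \<in> \<real> \<and>
      0 \<le> Re (\<Sum>i\<in>UNIV. \<Sum>j\<in>UNIV. cnj (v$i) * A$i$j * v$j))"

definition density :: "complex^'n^'n \<Rightarrow> bool" where
  "density \<rho> \<longleftrightarrow> psd \<rho> \<and> (\<Sum>i\<in>UNIV. \<rho>$i$i) = 1"

text \<open>I_2 tensor rho on H_2 (x) H_1, basis indexed by pairs (i2, i1).\<close>
definition id_tensor :: "complex^'a^'a \<Rightarrow> complex^('b::finite \<times> 'a)^('b \<times> 'a)" where
  "id_tensor \<rho> = (\<chi> p q. (if fst p = fst q then 1 else 0) * \<rho> $ snd p $ snd q)"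

text \<open>A quantum 1-tester with outcomes indexed by the finite type 'm (M = CARD('m)).\<close>
definition is_tester ::
  "complex^('b::finite \<times> 'a::finite)^('b \<times> 'a)^'m \<Rightarrow> complex^'a^'a \<Rightarrow> bool" where
  "is_tester T \<rho> \<longleftrightarrow> (\<forall>i. psd (T$i)) \<and> density \<rho> \<and> (\<Sum>i\<in>UNIV. T$i) = id_tensor \<rho>"

definition testers :: "(complex^('b::finite \<times> 'a::finite)^('b \<times> 'a)^'m) set" where
  "testers = {T. \<exists>\<rho>. is_tester T \<rho>}"

end

theory Submission
  imports Defs
begin

(* Write Q = I \<otimes> \<rho> = \<Sum>i T_i.  The proof has two parts.

   If D_i = T_i Y_i T_i for every outcome i and \<Sum>i D_i = I \<otimes> \<sigma> with tr \<sigma> = 0,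
   then D = 0.  For Hermitian D this is extremality: a positive T_i dominates T_i Y T_i
   (|<v, T_i Y T_i v>| \<le> c <v, T_i v>), so T \<pm> \<epsilon> D are testers for small \<epsilon> and T is their
   midpoint.  The general case follows from the Hermitian matrices D + D' and i (D - D'),
   D' the adjoint of D.

   The sandwich space A M B has dimension
   rank A * rank B for Hermitian A, B.  The space V of families (T_i Y_i T_i)_i has dimension
   \<Sum>i r_i\<^sup>2; summation maps V into Q M Q (ker Q \<subseteq> ker T_i), of dimension rank(Q)\<^sup>2 \<le> (d_2 r)\<^sup>2,
   and so does W = I \<otimes> {traceless elements of \<rho> M \<rho>}, of dimension \<ge> r\<^sup>2 - 1.  Rigidity says
   that summation is injective on V and its image meets W only in 0, which gives
   \<Sum>i r_i\<^sup>2 + r\<^sup>2 - 1 \<le> (d_2 r)\<^sup>2.  The bound on the number of outcomes follows since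
   r_i \<ge> 1 and r \<le> d_1. *)

section \<open>Sesquilinear form, adjoint and positive operators\<close>

definition cinner :: "complex^'n \<Rightarrow> complex^'n \<Rightarrow> complex" where
  "cinner u w = (\<Sum>i\<in>UNIV. cnj (u$i) * w$i)"

definition mat_adj :: "complex^'n^'m \<Rightarrow> complex^'m^'n" where
  "mat_adj A = (\<chi> i j. cnj (A$j$i))"

definition sqnorm :: "complex^'n \<Rightarrow> real" where
  "sqnorm v = (\<Sum>i\<in>UNIV. (cmod (v$i))^2)"

lemma psd_cinner: "psd A \<longleftrightarrow> (\<forall>v. cinner v (A *v v) \<in> \<real> \<and> 0 \<le> Re (cinner v (A *v v)))"
proof -
  have "\<And>v. (\<Sum>i\<in>UNIV. \<Sum>j\<in>UNIV. cnj (v$i) * A$i$j * v$j) = cinner v (A *v v)"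
    by (simp add: cinner_def matrix_vector_mult_def sum_distrib_left mult.assoc)
  then show ?thesis unfolding psd_def by simp
qed

lemma cinner_add_left: "cinner (u + v) w = cinner u w + cinner v w"
  by (simp add: cinner_def sum.distrib algebra_simps)

lemma cinner_add_right: "cinner u (v + w) = cinner u v + cinner u w"
  by (simp add: cinner_def sum.distrib algebra_simps)

lemma cinner_diff_left: "cinner (u - v) w = cinner u w - cinner v w"
  by (simp add: cinner_def sum_subtractf algebra_simps)

lemma cinner_diff_right: "cinner u (v - w) = cinner u v - cinner u w"
  by (simp add: cinner_def sum_subtractf algebra_simps)

lemma cinner_scale_left: "cinner (c *s u) w = cnj c * cinner u w"
  by (simp add: cinner_def sum_distrib_left algebra_simps)

lemma cinner_scale_right: "cinner u (c *s w) = c * cinner u w"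
  by (simp add: cinner_def sum_distrib_left algebra_simps)

lemma cinner_zero_right [simp]: "cinner u 0 = 0"
  by (simp add: cinner_def)

lemma cinner_sum_right: "cinner u (sum f S) = (\<Sum>i\<in>S. cinner u (f i))"
  by (induction S rule: infinite_finite_induct) (auto simp: cinner_add_right)

lemma cinner_commute: "cinner u w = cnj (cinner w u)"
  by (simp add: cinner_def mult.commute)

lemma cinner_self: "cinner v v = of_real (sqnorm v)"
  by (simp add: cinner_def sqnorm_def mult.commute complex_mult_cnj cmod_def)

lemma cinner_axis_left: "cinner (axis i a) w = cnj a * w$i"
proof -
  have "cinner (axis i a) w = (\<Sum>k\<in>UNIV. if k = i then cnj a * w$k else 0)"
    unfolding cinner_def by (rule sum.cong) (auto simp: axis_def)
  then show ?thesis by simp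
qed

lemma cinner_adj: "cinner u (A *v w) = cinner (mat_adj A *v u) w"
proof -
  have "cinner u (A *v w) = (\<Sum>i\<in>UNIV. \<Sum>j\<in>UNIV. cnj (u$i) * (A$i$j * w$j))"
    by (simp add: cinner_def matrix_vector_mult_def sum_distrib_left)
  also have "\<dots> = (\<Sum>j\<in>UNIV. \<Sum>i\<in>UNIV. cnj (u$i) * (A$i$j * w$j))"
    by (rule sum.swap)
  also have "\<dots> = (\<Sum>j\<in>UNIV. (\<Sum>i\<in>UNIV. cnj (u$i) * A$i$j) * w$j)"
    by (simp add: sum_distrib_right mult.assoc)
  also have "\<dots> = cinner (mat_adj A *v u) w"
    by (simp add: cinner_def mat_adj_def matrix_vector_mult_def mult.commute)
  finally show ?thesis .
qed

lemma mat_adj_mat_adj [simp]: "mat_adj (mat_adj A) = A"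
  by (simp add: mat_adj_def vec_eq_iff)

lemma mat_adj_mult: "mat_adj (A ** B) = mat_adj B ** mat_adj A"
  by (simp add: mat_adj_def vec_eq_iff matrix_matrix_mult_def mult.commute)

lemma mat_adj_add: "mat_adj (A + B) = mat_adj A + mat_adj B"
  by (simp add: mat_adj_def vec_eq_iff)

lemma mat_adj_sum: "mat_adj (sum f S) = (\<Sum>i\<in>S. mat_adj (f i))"
  by (induction S rule: infinite_finite_induct) (auto simp: mat_adj_add mat_adj_def vec_eq_iff)

lemma matrix_vector_mult_scale: "A *v (c *s x) = c *s (A *v x)" for A :: "complex^'n^'m"
  by (rule vec.linear_scale[OF matrix_vector_mul_linear_gen])

lemma matrix_vector_mult_sum: "(sum f S) *v v = (\<Sum>i\<in>S. f i *v v)" for f :: "'i \<Rightarrow> complex^'n^'m"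
  by (induction S rule: infinite_finite_induct) (auto simp: matrix_vector_mult_add_rdistrib)

lemma matrix_vector_mult_axis: "A *v axis k c = (\<chi> l. A$l$k * c)"
  by (simp add: matrix_vector_mult_def axis_def vec_eq_iff if_distrib cong: if_cong)

lemma cinner_two_axes:
  assumes "i \<noteq> j"
  shows "cinner (axis i a + axis j b) (A *v (axis i a + axis j b)) =
    cnj a * A$i$i * a + cnj a * A$i$j * b + cnj b * A$j$i * a + cnj b * A$j$j * b"
  using assms
  by (simp add: cinner_add_left matrix_vector_right_distrib cinner_add_right cinner_axis_left
      matrix_vector_mult_axis algebra_simps)

(* A positive operator is Hermitian: the form is real on v = e_i + e_j and v = e_i + i e_j. *)
lemma psd_hermitian:
  assumes "psd A" shows "mat_adj A = A"
proof -
  have real: "\<And>v. cinner v (A *v v) \<in> \<real>" using assms by (simp add: psd_cinner)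
  have diag: "A$k$k \<in> \<real>" for k
    using real[of "axis k 1"] by (simp add: cinner_axis_left matrix_vector_mult_axis)
  have entry: "A$j$i = cnj (A$i$j)" for i j
  proof (cases "i = j")
    case True
    then show ?thesis using diag[of i] by (simp add: Reals_cnj_iff)
  next
    case False
    have 1: "A$i$i + A$i$j + A$j$i + A$j$j \<in> \<real>"
      using real[of "axis i 1 + axis j 1"] cinner_two_axes[OF False, of 1 1 A] by simp
    have e2: "cinner (axis i 1 + axis j \<i>) (A *v (axis i 1 + axis j \<i>))
        = A$i$i + \<i> * A$i$j - \<i> * A$j$i + A$j$j"
    proof -
      have "cinner (axis i 1 + axis j \<i>) (A *v (axis i 1 + axis j \<i>)) =
        cnj 1 * A$i$i * 1 + cnj 1 * A$i$j * \<i> + cnj \<i> * A$j$i * 1 + cnj \<i> * A$j$j * \<i>"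
        by (rule cinner_two_axes[OF False])
      also have "cnj \<i> * A$j$j * \<i> = A$j$j" by (simp add: mult.commute mult.left_commute)
      finally show ?thesis by (simp add: mult.commute)
    qed
    have 2: "A$i$i + \<i> * A$i$j - \<i> * A$j$i + A$j$j \<in> \<real>"
      using real[of "axis i 1 + axis j \<i>"] unfolding e2 .
    have "Im (A$i$j) + Im (A$j$i) = 0" using 1 diag[of i] diag[of j] by (simp add: complex_is_Real_iff)
    moreover have "Re (A$i$j) - Re (A$j$i) = 0"
      using 2 diag[of i] diag[of j] by (simp add: complex_is_Real_iff)
    ultimately show ?thesis by (simp add: complex_eq_iff)
  qed
  have "cnj (A$j$i) = A$i$j" for i j using entry[of j i] by simp
  then show ?thesis by (simp add: mat_adj_def vec_eq_iff)
qed

lemma hermitian_form_real: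
  assumes "mat_adj D = D" shows "cinner v (D *v v) \<in> \<real>"
proof -
  have "cinner v (D *v v) = cinner (D *v v) v" using cinner_adj[of v D v] assms by simp
  also have "\<dots> = cnj (cinner v (D *v v))" by (rule cinner_commute)
  finally show ?thesis by (metis Reals_cnj_iff)
qed

lemma psd_sum: "(\<And>i. i \<in> S \<Longrightarrow> psd (f i)) \<Longrightarrow> psd (sum f S)"
  unfolding psd_cinner
proof
  fix v assume psd: "\<And>i. i \<in> S \<Longrightarrow> \<forall>v. cinner v (f i *v v) \<in> \<real> \<and> 0 \<le> Re (cinner v (f i *v v))"
  have "cinner v (sum f S *v v) = (\<Sum>i\<in>S. cinner v (f i *v v))"
    by (simp add: matrix_vector_mult_sum cinner_sum_right)
  moreover have "(\<Sum>i\<in>S. cinner v (f i *v v)) \<in> \<real>" using psd by (intro sum_in_Reals) auto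
  moreover have "0 \<le> Re (\<Sum>i\<in>S. cinner v (f i *v v))" using psd by (simp add: Re_sum sum_nonneg)
  ultimately show "cinner v (sum f S *v v) \<in> \<real> \<and> 0 \<le> Re (cinner v (sum f S *v v))" by simp
qed

lemma sqnorm_nonneg: "0 \<le> sqnorm v"
  by (simp add: sqnorm_def sum_nonneg)

lemma sqnorm_le_0: "sqnorm v \<le> 0 \<Longrightarrow> v = 0"
proof -
  assume "sqnorm v \<le> 0"
  then have "(\<Sum>i\<in>UNIV. (cmod (v$i))^2) = 0" using sqnorm_nonneg[of v] by (simp add: sqnorm_def)
  then have "\<forall>i\<in>UNIV. (cmod (v$i))^2 = 0" by (subst (asm) sum_nonneg_eq_0_iff) auto
  then show "v = 0" by (simp add: vec_eq_iff)
qed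

lemma norm_mult_le_sqnorm: "cmod (v$i) * cmod (v$j) \<le> sqnorm v"
proof -
  have le: "(cmod (v$k))^2 \<le> sqnorm v" for k
    unfolding sqnorm_def by (rule member_le_sum) auto
  have "cmod (v$i) * cmod (v$j) \<le> (max (cmod (v$i)) (cmod (v$j)))^2"
    by (simp add: power2_eq_square mult_mono max_def)
  also have "\<dots> \<le> sqnorm v" using le[of i] le[of j] by (simp add: max_def)
  finally show ?thesis .
qed

lemma cinner_quadratic_bound:
  "cmod (cinner w (A *v w)) \<le> (\<Sum>i\<in>UNIV. \<Sum>j\<in>UNIV. cmod (A$i$j)) * sqnorm w"
proof -
  have "cmod (cinner w (A *v w)) = cmod (\<Sum>i\<in>UNIV. \<Sum>j\<in>UNIV. cnj (w$i) * A$i$j * w$j)"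
    by (simp add: cinner_def matrix_vector_mult_def sum_distrib_left mult.assoc)
  also have "\<dots> \<le> (\<Sum>i\<in>UNIV. \<Sum>j\<in>UNIV. cmod (cnj (w$i) * A$i$j * w$j))"
    by (rule order_trans[OF norm_sum sum_mono]) (rule norm_sum)
  also have "\<dots> \<le> (\<Sum>i\<in>UNIV. \<Sum>j\<in>UNIV. cmod (A$i$j) * sqnorm w)"
  proof (intro sum_mono)
    fix i j
    have "cmod (cnj (w$i) * A$i$j * w$j) = cmod (A$i$j) * (cmod (w$i) * cmod (w$j))"
      by (simp add: norm_mult)
    also have "\<dots> \<le> cmod (A$i$j) * sqnorm w"
      by (rule mult_left_mono[OF norm_mult_le_sqnorm]) simp
    finally show "cmod (cnj (w$i) * A$i$j * w$j) \<le> cmod (A$i$j) * sqnorm w" .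
  qed
  also have "\<dots> = (\<Sum>i\<in>UNIV. \<Sum>j\<in>UNIV. cmod (A$i$j)) * sqnorm w"
    by (simp add: sum_distrib_right)
  finally show ?thesis .
qed

(* For positive T, |Tv|\<^sup>2 \<le> C <v, T v>: expand 0 \<le> <v - Tv/C, T (v - Tv/C)>. *)
lemma psd_image_bound:
  assumes "psd T"
  shows "\<exists>C>0. \<forall>v. sqnorm (T *v v) \<le> C * Re (cinner v (T *v v))"
proof -
  define C0 where "C0 = (\<Sum>i\<in>UNIV. \<Sum>j\<in>UNIV. cmod (T$i$j))"
  have C0: "0 \<le> C0" unfolding C0_def by (intro sum_nonneg) auto
  define C where "C = C0 + 1"
  have Cpos: "C > 0" using C0 by (simp add: C_def)
  have herm: "mat_adj T = T" using psd_hermitian[OF assms] .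
  have "sqnorm (T *v v) \<le> C * Re (cinner v (T *v v))" for v
  proof -
    define w where "w = T *v v"
    define n where "n = sqnorm w"
    define c where "c = (of_real (1 / C) :: complex)"
    have e1: "cinner w (T *v v) = of_real n" by (simp add: w_def n_def cinner_self)
    have e2: "cinner v (T *v w) = of_real n"
      using cinner_adj[of v T w] herm by (simp add: w_def n_def cinner_self)
    have "0 \<le> Re (cinner (v - c *s w) (T *v (v - c *s w)))"
      using assms by (simp add: psd_cinner)
    also have "cinner (v - c *s w) (T *v (v - c *s w)) =
      cinner v (T *v v) - c * cinner v (T *v w) - cnj c * cinner w (T *v v) + cnj c * c * cinner w (T *v w)"
      by (simp add: matrix_vector_mult_diff_distrib matrix_vector_mult_scale cinner_diff_left
          cinner_diff_right cinner_scale_left cinner_scale_right algebra_simps)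
    also have "Re \<dots> = Re (cinner v (T *v v)) - 2 * n / C + Re (cinner w (T *v w)) / C^2"
      by (simp add: e1 e2 c_def power2_eq_square)
    also have "Re (cinner w (T *v w)) \<le> C0 * n"
      using cinner_quadratic_bound[of w T] complex_Re_le_cmod[of "cinner w (T *v w)"]
      unfolding C0_def n_def by linarith
    hence "Re (cinner w (T *v w)) / C^2 \<le> C * n / C^2"
      using sqnorm_nonneg[of w] unfolding n_def C_def by (intro divide_right_mono) (auto simp: algebra_simps)
    finally have "0 \<le> Re (cinner v (T *v v)) - 2 * n / C + C * n / C^2" by simp
    also have "C * n / C^2 = n / C" using Cpos by (simp add: power2_eq_square)
    finally have "n / C \<le> Re (cinner v (T *v v))" by simp
    then show ?thesis using Cpos unfolding n_def w_def by (simp add: divide_le_eq mult.commute)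
  qed
  then show ?thesis using Cpos by blast
qed

lemma psd_form_zero_kernel:
  assumes "psd T" "Re (cinner v (T *v v)) = 0"
  shows "T *v v = 0"
proof -
  obtain C where "\<And>v. sqnorm (T *v v) \<le> C * Re (cinner v (T *v v))"
    using psd_image_bound[OF assms(1)] by blast
  then have "sqnorm (T *v v) \<le> 0" using assms(2) by (metis mult_zero_right)
  then show ?thesis by (rule sqnorm_le_0)
qed

lemma psd_sum_kernel:
  fixes T :: "complex^'n^'n^'m::finite"
  assumes "\<And>i. psd (T$i)" and "(\<Sum>i\<in>UNIV. T$i) *v x = 0"
  shows "T$i *v x = 0"
proof -
  have "(\<Sum>j\<in>UNIV. cinner x (T$j *v x)) = 0"
    using assms(2) by (simp add: matrix_vector_mult_sum cinner_sum_right[symmetric])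
  then have "(\<Sum>j\<in>UNIV. Re (cinner x (T$j *v x))) = 0" by (metis Re_sum zero_complex.sel(1))
  moreover have "\<And>j. 0 \<le> Re (cinner x (T$j *v x))" using assms(1) by (simp add: psd_cinner)
  ultimately have "\<forall>j\<in>UNIV. Re (cinner x (T$j *v x)) = 0" by (subst (asm) sum_nonneg_eq_0_iff) auto
  then show ?thesis using psd_form_zero_kernel[OF assms(1)] by blast
qed

lemma psd_dominates_sandwich:
  assumes "psd T"
  shows "\<exists>c\<ge>0. \<forall>v. cmod (cinner v ((T ** Y ** T) *v v)) \<le> c * Re (cinner v (T *v v))"
proof -
  obtain C where C: "C > 0" "\<And>v. sqnorm (T *v v) \<le> C * Re (cinner v (T *v v))"
    using psd_image_bound[OF assms] by blast
  define CY where "CY = (\<Sum>i\<in>UNIV. \<Sum>j\<in>UNIV. cmod (Y$i$j))"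
  have CY: "0 \<le> CY" unfolding CY_def by (intro sum_nonneg) auto
  have herm: "mat_adj T = T" using psd_hermitian[OF assms] .
  have "cmod (cinner v ((T ** Y ** T) *v v)) \<le> (CY * C) * Re (cinner v (T *v v))" for v
  proof -
    have "cinner v ((T ** Y ** T) *v v) = cinner v (T *v (Y *v (T *v v)))"
      by (simp add: matrix_vector_mul_assoc matrix_mul_assoc)
    also have "\<dots> = cinner (T *v v) (Y *v (T *v v))" using cinner_adj[of v T] herm by simp
    finally have "cmod (cinner v ((T ** Y ** T) *v v)) \<le> CY * sqnorm (T *v v)"
      using cinner_quadratic_bound[of "T *v v" Y] unfolding CY_def by simp
    also have "\<dots> \<le> CY * (C * Re (cinner v (T *v v)))"
      by (rule mult_left_mono[OF C(2) CY])
    finally show ?thesis by (simp add: mult.assoc)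
  qed
  then show ?thesis using CY C(1) by (intro exI[of _ "CY * C"]) auto
qed

lemma psd_perturb:
  assumes "psd T" "mat_adj D = D"
    and dom: "\<And>v. cmod (cinner v (D *v v)) \<le> c * Re (cinner v (T *v v))"
    and e: "\<bar>e\<bar> * c \<le> 1"
  shows "psd (T + e *\<^sub>R D)"
  unfolding psd_cinner
proof
  fix v
  have "(e *\<^sub>R D)$i$j = of_real e * D$i$j" for i j
    by (metis vector_scaleR_component scaleR_conv_of_real)
  then have scaleR: "(e *\<^sub>R D) *v v = (of_real e :: complex) *s (D *v v)"
    unfolding matrix_vector_mult_def vec_eq_iff by (auto simp: sum_distrib_left mult.assoc intro!: sum.cong)
  have eq: "cinner v ((T + e *\<^sub>R D) *v v) = cinner v (T *v v) + of_real e * cinner v (D *v v)"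
    by (simp add: matrix_vector_mult_add_rdistrib scaleR cinner_add_right cinner_scale_right)
  have r1: "cinner v (T *v v) \<in> \<real>" and p1: "0 \<le> Re (cinner v (T *v v))"
    using assms(1) by (auto simp: psd_cinner)
  have r2: "cinner v (D *v v) \<in> \<real>" using hermitian_form_real[OF assms(2)] .
  have "\<bar>e * Re (cinner v (D *v v))\<bar> \<le> \<bar>e\<bar> * (c * Re (cinner v (T *v v)))"
    using dom[of v] abs_Re_le_cmod[of "cinner v (D *v v)"] by (simp add: abs_mult mult_left_mono)
  also have "\<dots> \<le> Re (cinner v (T *v v))" using mult_right_mono[OF e p1] by (simp add: mult.assoc)
  finally have "0 \<le> Re (cinner v (T *v v)) + e * Re (cinner v (D *v v))" by linarith
  then show "cinner v ((T + e *\<^sub>R D) *v v) \<in> \<real> \<and> 0 \<le> Re (cinner v ((T + e *\<^sub>R D) *v v))"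
    unfolding eq using r1 r2 by auto
qed


section \<open>The operator I \<otimes> \<rho> and perturbations of testers\<close>

lemma sum_UNIV_pair:
  "(\<Sum>p\<in>(UNIV::('b::finite \<times> 'a::finite) set). f p) = (\<Sum>b\<in>UNIV. \<Sum>a\<in>UNIV. f (b,a))"
  by (simp add: sum.cartesian_product UNIV_Times_UNIV[symmetric] del: UNIV_Times_UNIV)

lemma id_tensor_add:
  "id_tensor (A + B) = (id_tensor A + id_tensor B :: complex^('b::finite \<times> 'a::finite)^('b \<times> 'a))"
  by (simp add: id_tensor_def vec_eq_iff algebra_simps)

lemma id_tensor_scaleR:
  "id_tensor (e *\<^sub>R A) = (e *\<^sub>R id_tensor A :: complex^('b::finite \<times> 'a::finite)^('b \<times> 'a))"
  by (simp add: id_tensor_def vec_eq_iff mult_scaleR_right)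

lemma mat_adj_id_tensor:
  "mat_adj (id_tensor \<sigma>) = (id_tensor (mat_adj \<sigma>) :: complex^('b::finite \<times> 'a::finite)^('b \<times> 'a))"
  by (auto simp: id_tensor_def mat_adj_def vec_eq_iff)

lemma id_tensor_mult:
  "id_tensor A ** id_tensor B = (id_tensor (A ** B) :: complex^('b::finite \<times> 'a::finite)^('b \<times> 'a))"
proof -
  have "(id_tensor A ** id_tensor B :: complex^('b \<times> 'a)^('b \<times> 'a)) $ (b,a) $ (b'',a'')
      = id_tensor (A ** B) $ (b,a) $ (b'',a'')" for b a b'' a''
  proof -
    have "(id_tensor A ** id_tensor B :: complex^('b \<times> 'a)^('b \<times> 'a)) $ (b,a) $ (b'',a'')
      = (\<Sum>b'\<in>UNIV. \<Sum>a'\<in>UNIV. ((if b = b' then 1 else 0) * A$a$a') * ((if b' = b'' then 1 else 0) * B$a'$a''))"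
      by (simp add: matrix_matrix_mult_def id_tensor_def sum_UNIV_pair)
    also have "\<dots> = (\<Sum>b'\<in>UNIV. if b' = b then (if b = b'' then (\<Sum>a'\<in>UNIV. A$a$a' * B$a'$a'') else 0) else 0)"
      by (rule sum.cong) (auto intro!: sum.cong)
    also have "\<dots> = id_tensor (A ** B) $ (b,a) $ (b'',a'')"
      by (simp add: id_tensor_def matrix_matrix_mult_def)
    finally show ?thesis .
  qed
  then show ?thesis by (simp add: vec_eq_iff)
qed

(* \<rho> is positive whenever I \<otimes> \<rho> is: test I \<otimes> \<rho> on a vector supported on one block. *)
lemma psd_id_tensorD:
  fixes A :: "complex^'a::finite^'a"
  assumes "psd (id_tensor A :: complex^('b::finite \<times> 'a)^('b \<times> 'a))"
  shows "psd A"
  unfolding psd_cinner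
proof
  fix v :: "complex^'a"
  obtain b0 :: 'b where True by blast
  define w :: "complex^('b \<times> 'a)" where "w = (\<chi> p. if fst p = b0 then v$(snd p) else 0)"
  have "(id_tensor A *v w) $ (b,a) = (if b = b0 then (A *v v)$a else 0)" for b a
  proof -
    have "(id_tensor A *v w) $ (b,a) = (\<Sum>b'\<in>UNIV. \<Sum>a'\<in>UNIV.
        (if b = b' then 1 else 0) * A$a$a' * (if b' = b0 then v$a' else 0))"
      by (simp add: matrix_vector_mult_def id_tensor_def w_def sum_UNIV_pair cong: if_cong)
    also have "\<dots> = (\<Sum>b'\<in>UNIV. if b' = b then (\<Sum>a'\<in>UNIV. (if b' = b0 then A$a$a' * v$a' else 0)) else 0)"
      by (rule sum.cong[OF refl]) (auto intro!: sum.cong)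
    also have "\<dots> = (if b = b0 then (A *v v)$a else 0)"
      by (simp add: matrix_vector_mult_def)
    finally show ?thesis .
  qed
  then have "cinner w (id_tensor A *v w) = (\<Sum>b\<in>UNIV. \<Sum>a\<in>UNIV. if b = b0 then cnj (v$a) * (A *v v)$a else 0)"
    by (simp add: cinner_def sum_UNIV_pair w_def cong: if_cong) (auto intro!: sum.cong)
  also have "\<dots> = (\<Sum>b\<in>UNIV. if b = b0 then cinner v (A *v v) else 0)"
    by (rule sum.cong) (auto simp: cinner_def)
  also have "\<dots> = cinner v (A *v v)" by simp
  finally show "cinner v (A *v v) \<in> \<real> \<and> 0 \<le> Re (cinner v (A *v v))"
    using assms unfolding psd_cinner by metis
qed

lemma tester_perturb:
  fixes T H :: "complex^('b::finite \<times> 'a::finite)^('b \<times> 'a)^'m::finite"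
    and \<rho> \<sigma> :: "complex^'a^'a"
  assumes tester: "is_tester T \<rho>"
    and herm: "\<And>i. mat_adj (H$i) = H$i"
    and dom: "\<And>i v. cmod (cinner v ((H$i) *v v)) \<le> c i * Re (cinner v ((T$i) *v v))"
    and sum: "(\<Sum>i\<in>UNIV. H$i) = id_tensor \<sigma>"
    and trace: "(\<Sum>a\<in>UNIV. \<sigma>$a$a) = 0"
    and e: "\<And>i. \<bar>e\<bar> * c i \<le> 1"
  shows "is_tester (T + e *\<^sub>R H) (\<rho> + e *\<^sub>R \<sigma>)"
proof -
  have T: "\<And>i. psd (T$i)" "density \<rho>" "(\<Sum>i\<in>UNIV. T$i) = id_tensor \<rho>"
    using tester unfolding is_tester_def by auto
  have psd: "psd ((T + e *\<^sub>R H)$i)" for i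
    using psd_perturb[OF T(1) herm dom e] by simp
  have S: "(\<Sum>i\<in>UNIV. (T + e *\<^sub>R H)$i) = id_tensor (\<rho> + e *\<^sub>R \<sigma>)"
    by (simp add: sum.distrib scaleR_sum_right[symmetric] T(3) sum id_tensor_add id_tensor_scaleR)
  have "psd (id_tensor (\<rho> + e *\<^sub>R \<sigma>) :: complex^('b \<times> 'a)^('b \<times> 'a))"
    unfolding S[symmetric] by (rule psd_sum) (rule psd)
  then have "psd (\<rho> + e *\<^sub>R \<sigma>)" by (rule psd_id_tensorD)
  moreover have "(\<Sum>a\<in>UNIV. (\<rho> + e *\<^sub>R \<sigma>)$a$a) = 1"
    using T(2) trace by (simp add: density_def sum.distrib scaleR_sum_right[symmetric])
  ultimately show ?thesis using psd S by (simp add: is_tester_def density_def)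
qed

lemma midpoint_opposite: "midpoint (x + e *\<^sub>R d) (x + (-e) *\<^sub>R d) = (x::'v::real_vector)"
proof -
  have "x + e *\<^sub>R d + (x + (-e) *\<^sub>R d) = 2 *\<^sub>R x"
    by (simp add: scaleR_2 algebra_simps)
  then show ?thesis by (simp add: midpoint_def)
qed

(* Rigidity, Hermitian case: an extreme tester admits no such perturbation direction,
   since T would be the midpoint of the two testers T \<pm> e H. *)
lemma extreme_tester_hermitian_rigid:
  fixes T H :: "complex^('b::finite \<times> 'a::finite)^('b \<times> 'a)^'m::finite"
    and \<rho> \<sigma> :: "complex^'a^'a"
  assumes tester: "is_tester T \<rho>"
    and ext: "T extreme_point_of testers"
    and herm: "\<And>i. mat_adj (H$i) = H$i"
    and sandwich: "\<And>i. \<exists>Y. H$i = T$i ** Y ** T$i"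
    and sum: "(\<Sum>i\<in>UNIV. H$i) = id_tensor \<sigma>"
    and trace: "(\<Sum>a\<in>UNIV. \<sigma>$a$a) = 0"
  shows "H = 0"
proof (rule ccontr)
  assume "H \<noteq> 0"
  have "\<exists>c\<ge>0. \<forall>v. cmod (cinner v ((H$i) *v v)) \<le> c * Re (cinner v ((T$i) *v v))" for i
  proof -
    obtain Y where "H$i = T$i ** Y ** T$i" using sandwich by blast
    moreover have "psd (T$i)" using tester by (simp add: is_tester_def)
    ultimately show ?thesis using psd_dominates_sandwich by metis
  qed
  then obtain c where c: "\<And>i. c i \<ge> 0"
    and dom: "\<And>i v. cmod (cinner v ((H$i) *v v)) \<le> c i * Re (cinner v ((T$i) *v v))"
    by metis
  define e where "e = 1 / (1 + (\<Sum>i\<in>UNIV. c i))"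
  have e: "e > 0" using c by (simp add: e_def sum_nonneg add_pos_nonneg)
  have "c i \<le> (\<Sum>i\<in>UNIV. c i)" for i by (rule member_le_sum) (use c in auto)
  then have ec: "\<bar>e\<bar> * c i \<le> 1" "\<bar>-e\<bar> * c i \<le> 1" for i
    using e by (simp_all add: e_def field_simps add.commute add_increasing)
  have plus: "T + e *\<^sub>R H \<in> testers" and minus: "T + (-e) *\<^sub>R H \<in> testers"
    using tester_perturb[OF tester herm dom sum trace ec(1)]
      tester_perturb[OF tester herm dom sum trace ec(2)]
    unfolding testers_def by blast+
  have "T + e *\<^sub>R H \<noteq> T + (-e) *\<^sub>R H"
    using \<open>H \<noteq> 0\<close> e by (simp add: scaleR_left_diff_distrib[symmetric] flip: scaleR_minus_left)
  moreover have "midpoint (T + e *\<^sub>R H) (T + (-e) *\<^sub>R H) = T"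
    by (rule midpoint_opposite)
  ultimately have "T \<in> open_segment (T + e *\<^sub>R H) (T + (-e) *\<^sub>R H)"
    using midpoint_in_open_segment by metis
  then show False using ext plus minus unfolding extreme_point_of_def by blast
qed

definition mat_scale :: "complex \<Rightarrow> complex^'n^'k \<Rightarrow> complex^'n^'k" where
  "mat_scale c M = (\<chi> i j. c * M$i$j)"

lemma mat_scale_sandwich: "mat_scale c (A ** Y ** B) = A ** mat_scale c Y ** B"
  by (simp add: mat_scale_def vec_eq_iff matrix_matrix_mult_def sum_distrib_left sum_distrib_right
      mult.assoc mult.left_commute)

lemma mat_scale_sum: "mat_scale c (sum f S) = (\<Sum>i\<in>S. mat_scale c (f i))"
  by (induction S rule: infinite_finite_induct) (auto simp: mat_scale_def vec_eq_iff distrib_left)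

lemma id_tensor_mat_scale:
  "id_tensor (mat_scale c \<sigma>) = (mat_scale c (id_tensor \<sigma>) :: complex^('b::finite \<times> 'a::finite)^('b \<times> 'a))"
  by (simp add: id_tensor_def mat_scale_def vec_eq_iff mult_ac)

lemma sandwich_add: "A ** Y ** B + A ** Y' ** B = A ** (Y + Y') ** B"
  by (simp add: vec_eq_iff matrix_matrix_mult_def sum.distrib distrib_left distrib_right)

lemma extreme_tester_hermitian_part:
  fixes T D :: "complex^('b::finite \<times> 'a::finite)^('b \<times> 'a)^'m::finite"
    and \<rho> \<sigma> :: "complex^'a^'a"
  assumes tester: "is_tester T \<rho>"
    and ext: "T extreme_point_of testers"
    and sandwich: "\<And>i. \<exists>Y. D$i = T$i ** Y ** T$i"
    and sum: "(\<Sum>i\<in>UNIV. D$i) = id_tensor \<sigma>"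
    and trace: "(\<Sum>a\<in>UNIV. \<sigma>$a$a) = 0"
  shows "D$i + mat_adj (D$i) = 0"
proof -
  define H where "H = (\<chi> i. D$i + mat_adj (D$i))"
  have herm: "mat_adj (T$i) = T$i" for i using tester by (simp add: is_tester_def psd_hermitian)
  have "H = 0"
  proof (rule extreme_tester_hermitian_rigid[OF tester ext])
    show "mat_adj (H$i) = H$i" for i by (simp add: H_def mat_adj_add add.commute)
    show "\<exists>Y. H$i = T$i ** Y ** T$i" for i
    proof -
      obtain Y where Y: "D$i = T$i ** Y ** T$i" using sandwich by blast
      have "mat_adj (D$i) = T$i ** mat_adj Y ** T$i"
        using Y herm[of i] by (simp add: mat_adj_mult matrix_mul_assoc)
      then show ?thesis using Y by (auto simp: H_def sandwich_add)
    qed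
    show "(\<Sum>i\<in>UNIV. H$i) = id_tensor (\<sigma> + mat_adj \<sigma>)"
      by (simp add: H_def sum.distrib mat_adj_sum[symmetric] sum mat_adj_id_tensor id_tensor_add)
    have "(\<Sum>a\<in>UNIV. mat_adj \<sigma> $ a $ a) = cnj (\<Sum>a\<in>UNIV. \<sigma> $ a $ a)"
      by (simp add: mat_adj_def)
    then show "(\<Sum>a\<in>UNIV. (\<sigma> + mat_adj \<sigma>)$a$a) = 0"
      using trace by (simp add: sum.distrib)
  qed
  then have "H$i = 0" by simp
  then show ?thesis by (simp add: H_def)
qed

(* Rigidity: applying the Hermitian case to D and to i D forces D = 0. *)
lemma extreme_tester_rigid:
  fixes T D :: "complex^('b::finite \<times> 'a::finite)^('b \<times> 'a)^'m::finite"
    and \<rho> \<sigma> :: "complex^'a^'a"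
  assumes tester: "is_tester T \<rho>"
    and ext: "T extreme_point_of testers"
    and sandwich: "\<And>i. \<exists>Y. D$i = T$i ** Y ** T$i"
    and sum: "(\<Sum>i\<in>UNIV. D$i) = id_tensor \<sigma>"
    and trace: "(\<Sum>a\<in>UNIV. \<sigma>$a$a) = 0"
  shows "D = 0"
proof -
  have 1: "D$i + mat_adj (D$i) = 0" for i
    by (rule extreme_tester_hermitian_part[OF tester ext sandwich sum trace])
  define D' where "D' = (\<chi> i. mat_scale \<i> (D$i))"
  have 2: "D'$i + mat_adj (D'$i) = 0" for i
  proof (rule extreme_tester_hermitian_part[OF tester ext])
    show "\<exists>Y. D'$i = T$i ** Y ** T$i" for i
      using sandwich[of i] by (auto simp: D'_def mat_scale_sandwich)
    show "(\<Sum>i\<in>UNIV. D'$i) = id_tensor (mat_scale \<i> \<sigma>)"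
      by (simp add: D'_def mat_scale_sum[symmetric] sum id_tensor_mat_scale)
    show "(\<Sum>a\<in>UNIV. (mat_scale \<i> \<sigma>)$a$a) = 0"
      using trace by (simp add: mat_scale_def sum_distrib_left[symmetric])
  qed
  have "D$i$r$s = 0" for i r s
  proof -
    have a: "D$i$r$s + cnj (D$i$s$r) = 0"
      using arg_cong[OF 1[of i], of "\<lambda>M. M$r$s"] by (simp add: mat_adj_def)
    have b: "\<i> * D$i$r$s + cnj (\<i> * D$i$s$r) = 0"
      using arg_cong[OF 2[of i], of "\<lambda>M. M$r$s"] by (simp add: mat_adj_def D'_def mat_scale_def)
    from a b show ?thesis by (simp add: complex_eq_iff)
  qed
  then show ?thesis by (simp add: vec_eq_iff)
qed


section \<open>Rank under complex conjugation\<close>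

definition vconj :: "complex^'n \<Rightarrow> complex^'n" where
  "vconj v = (\<chi> j. cnj (v$j))"

definition mconj :: "complex^'n^'m \<Rightarrow> complex^'n^'m" where
  "mconj A = (\<chi> i j. cnj (A$i$j))"

(* Conjugation is semilinear, so it does not increase dimensions. *)
lemma dim_vconj_le: "vec.dim (vconj ` S) \<le> vec.dim (S :: (complex^'n) set)"
proof -
  obtain B where B: "B \<subseteq> S" "vec.independent B" "S \<subseteq> vec.span B" "card B = vec.dim S"
    using vec.basis_exists[of S] by blast
  have fB: "finite B" using B(2) vec.finiteI_independent by blast
  have "vconj ` S \<subseteq> vec.span (vconj ` B)"
  proof
    fix y assume "y \<in> vconj ` S"
    then obtain x where x: "x \<in> S" "y = vconj x" by blast
    then obtain u where "x = (\<Sum>v\<in>B. u v *s v)" using B(3) vec.span_finite[OF fB] by blast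
    then have "y = (\<Sum>v\<in>B. cnj (u v) *s vconj v)"
      using x(2) by (simp add: vconj_def vec_eq_iff sum_component)
    also have "\<dots> \<in> vec.span (vconj ` B)"
      by (intro vec.span_sum vec.span_scale vec.span_base imageI)
    finally show "y \<in> vec.span (vconj ` B)" .
  qed
  then have "vec.dim (vconj ` S) \<le> card (vconj ` B)" by (rule vec.dim_le_card) (use fB in simp)
  also have "\<dots> \<le> card B" by (rule card_image_le[OF fB])
  finally show ?thesis using B(4) by simp
qed

lemma dim_vconj: "vec.dim (vconj ` S) = vec.dim (S :: (complex^'n) set)"
proof -
  have "vconj ` vconj ` S = S" by (force simp: image_image vconj_def vec_eq_iff)
  then show ?thesis using dim_vconj_le[of S] dim_vconj_le[of "vconj ` S"] by simp
qed

lemma rank_mconj: "rank (mconj A) = rank A"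
proof -
  have "rows (mconj A) = vconj ` rows A"
    by (auto simp: rows_def row_def mconj_def vconj_def)
  then show ?thesis unfolding row_rank_def_gen by (simp add: dim_vconj)
qed

(* The library proves rank (transpose A) = rank A only over the reals; for Hermitian A
   the transpose is the entrywise conjugate. *)
lemma rank_transpose_hermitian: "mat_adj A = A \<Longrightarrow> rank (transpose A) = rank A"
proof -
  assume "mat_adj A = A"
  then have "transpose A = mconj A"
    by (auto simp: mat_adj_def transpose_def mconj_def vec_eq_iff)
  then show ?thesis by (simp add: rank_mconj)
qed

section \<open>Flattened matrices and the dimension of sandwich spaces\<close>

(* A k \<times> n matrix is identified with a vector indexed by 'k \<times> 'n, so that spaces of
   matrices become subspaces of a coordinate space and have a vec.dim. *)
definition flat :: "complex^'n^'k \<Rightarrow> complex^('k \<times> 'n)" where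
  "flat M = (\<chi> p. M $ fst p $ snd p)"

definition unflat :: "complex^('k \<times> 'n) \<Rightarrow> complex^'n^'k" where
  "unflat z = (\<chi> i j. z$(i,j))"

lemma flat_unflat [simp]: "flat (unflat z) = z"
  by (simp add: flat_def unflat_def vec_eq_iff)

lemma unflat_flat [simp]: "unflat (flat M) = M"
  by (simp add: flat_def unflat_def vec_eq_iff)

lemma flat_zero [simp]: "flat 0 = 0"
  by (simp add: flat_def vec_eq_iff)

lemma unflat_sum: "unflat (sum f S) = (\<Sum>i\<in>S. unflat (f i))"
  by (induction S rule: infinite_finite_induct) (auto simp: unflat_def vec_eq_iff)

definition vtensor :: "complex^'k \<Rightarrow> complex^'n \<Rightarrow> complex^('k \<times> 'n)" where
  "vtensor u v = (\<chi> p. u$fst p * v$snd p)"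

lemma vtensor_component [simp]: "vtensor u v $ (i,j) = u$i * v$j"
  by (simp add: vtensor_def)

lemma independent_family_image:
  fixes g :: "'p \<Rightarrow> complex^'k"
  assumes fX: "finite X"
    and ind: "\<And>c p. (\<Sum>q\<in>X. c q *s g q) = 0 \<Longrightarrow> p \<in> X \<Longrightarrow> c p = 0"
  shows "inj_on g X" "vec.independent (g ` X)"
proof -
  show inj: "inj_on g X"
  proof (rule inj_onI, rule ccontr)
    fix p q assume p: "p \<in> X" and q: "q \<in> X" and e: "g p = g q" and ne: "p \<noteq> q"
    define c where "c x = (if x = p then 1 else 0) - (if x = q then 1 else (0::complex))" for x
    have "(\<Sum>x\<in>X. c x *s g x) = (\<Sum>x\<in>X. (if x = p then g x else 0)) - (\<Sum>x\<in>X. (if x = q then g x else 0))"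
      unfolding c_def by (simp add: vector_sub_rdistrib sum_subtractf if_distrib[of "\<lambda>a. a *s _"] cong: if_cong)
    also have "\<dots> = 0" using p q e fX by simp
    finally have "c p = 0" using ind p by blast
    then show False using ne by (simp add: c_def)
  qed
  show "vec.independent (g ` X)" unfolding vec.independent_explicit
  proof (intro conjI allI impI ballI)
    show "finite (g ` X)" using fX by simp
  next
    fix c x assume z: "(\<Sum>v\<in>g ` X. c v *s v) = 0" and x: "x \<in> g ` X"
    have "(\<Sum>p\<in>X. c (g p) *s g p) = 0" using z by (simp add: sum.reindex[OF inj])
    moreover obtain p where "p \<in> X" "x = g p" using x by blast
    ultimately show "c x = 0" using ind[of "\<lambda>p. c (g p)"] by blast
  qed
qed

lemma independent_sum_zero:
  assumes "vec.independent B" "(\<Sum>v\<in>B. c v *s v) = (0::complex^'n)" "v \<in> B"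
  shows "c v = 0"
  using assms vec.independent_explicit by blast

lemma vtensor_independent:
  fixes BC :: "(complex^'k) set" and BR :: "(complex^'n) set"
  assumes iC: "vec.independent BC" and iR: "vec.independent BR"
    and z: "(\<Sum>p\<in>BC \<times> BR. c p *s case_prod vtensor p) = 0" and p: "p \<in> BC \<times> BR"
  shows "c p = 0"
proof -
  have comp: "(\<Sum>u\<in>BC. \<Sum>v\<in>BR. c (u,v) * (u$i * v$j)) = 0" for i j
  proof -
    have "(\<Sum>p\<in>BC \<times> BR. c p *s case_prod vtensor p) $ (i,j) = 0" using z by simp
    then show ?thesis by (simp add: sum_component sum.cartesian_product case_prod_beta)
  qed
  have row: "(\<Sum>u\<in>BC. c (u,v) * u$i) = 0" if v: "v \<in> BR" for i v
  proof -
    have "(\<Sum>v\<in>BR. (\<Sum>u\<in>BC. c (u,v) * u$i) *s v) $ j = 0" for j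
    proof -
      have "(\<Sum>v\<in>BR. (\<Sum>u\<in>BC. c (u,v) * u$i) *s v) $ j = (\<Sum>v\<in>BR. \<Sum>u\<in>BC. c (u,v) * (u$i * v$j))"
        by (simp add: sum_component sum_distrib_right mult.assoc)
      also have "\<dots> = (\<Sum>u\<in>BC. \<Sum>v\<in>BR. c (u,v) * (u$i * v$j))" by (rule sum.swap)
      finally show ?thesis using comp by simp
    qed
    then have "(\<Sum>v\<in>BR. (\<Sum>u\<in>BC. c (u,v) * u$i) *s v) = 0" by (simp add: vec_eq_iff)
    from independent_sum_zero[OF iR this v] show ?thesis by simp
  qed
  obtain u v where uv: "p = (u,v)" "u \<in> BC" "v \<in> BR" using p by blast
  have "(\<Sum>u\<in>BC. c (u,v) *s u) = 0"
    using row[OF uv(3)] by (simp add: vec_eq_iff sum_component mult.commute)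
  then show ?thesis using independent_sum_zero[OF iC _ uv(2), of "\<lambda>u. c (u,v)"] uv(1) by simp
qed

lemma vtensor_span:
  fixes BC :: "(complex^'k) set" and BR :: "(complex^'n) set"
  assumes fC: "finite BC" and fR: "finite BR"
    and u: "u \<in> vec.span BC" and v: "v \<in> vec.span BR"
  shows "vtensor u v \<in> vec.span (case_prod vtensor ` (BC \<times> BR))"
proof -
  obtain a where a: "u = (\<Sum>x\<in>BC. a x *s x)" using u vec.span_finite[OF fC] by blast
  obtain b where b: "v = (\<Sum>y\<in>BR. b y *s y)" using v vec.span_finite[OF fR] by blast
  have "vtensor u v $ (i,j) = (\<Sum>x\<in>BC. \<Sum>y\<in>BR. (a x * b y) *s vtensor x y) $ (i,j)" for i j
  proof -
    have "vtensor u v $ (i,j) = (\<Sum>x\<in>BC. a x * x$i) * (\<Sum>y\<in>BR. b y * y$j)"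
      by (simp add: a b sum_component)
    also have "\<dots> = (\<Sum>x\<in>BC. \<Sum>y\<in>BR. (a x * x$i) * (b y * y$j))" by (rule sum_product)
    also have "\<dots> = (\<Sum>x\<in>BC. \<Sum>y\<in>BR. (a x * b y) *s vtensor x y) $ (i,j)"
      by (simp add: sum_component mult_ac)
    finally show ?thesis .
  qed
  then have "vtensor u v = (\<Sum>x\<in>BC. \<Sum>y\<in>BR. (a x * b y) *s vtensor x y)"
    by (simp add: vec_eq_iff split_paired_all)
  also have "\<dots> \<in> vec.span (case_prod vtensor ` (BC \<times> BR))"
    by (intro vec.span_sum vec.span_scale vec.span_base) auto
  finally show ?thesis .
qed

definition sandwich_space :: "complex^'p^'k \<Rightarrow> complex^'n^'q \<Rightarrow> (complex^('k \<times> 'n)) set" where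
  "sandwich_space A B = range (\<lambda>Y :: complex^'q^'p. flat (A ** Y ** B))"

lemma subspace_sandwich_space: "vec.subspace (sandwich_space A B)"
  unfolding vec.subspace_def sandwich_space_def
proof (intro conjI ballI allI)
  show "0 \<in> range (\<lambda>Y. flat (A ** Y ** B))"
    by (rule image_eqI[of _ _ 0]) (auto simp: flat_def vec_eq_iff matrix_matrix_mult_def)
next
  fix x y assume "x \<in> range (\<lambda>Y. flat (A ** Y ** B))" "y \<in> range (\<lambda>Y. flat (A ** Y ** B))"
  then obtain X Y where "x = flat (A ** X ** B)" "y = flat (A ** Y ** B)" by blast
  then show "x + y \<in> range (\<lambda>Y. flat (A ** Y ** B))"
    by (intro image_eqI[of _ _ "X + Y"])
      (simp_all add: flat_def vec_eq_iff matrix_matrix_mult_def sum.distrib distrib_left distrib_right)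
next
  fix c x assume "x \<in> range (\<lambda>Y. flat (A ** Y ** B))"
  then obtain X where X: "x = flat (A ** X ** B)" by blast
  show "c *s x \<in> range (\<lambda>Y. flat (A ** Y ** B))"
  proof (intro image_eqI[of _ _ "\<chi> i j. c * X$i$j"])
    show "c *s x = flat (A ** (\<chi> i j. c * X$i$j) ** B)"
      by (simp add: X flat_def vec_eq_iff matrix_matrix_mult_def sum_distrib_left sum_distrib_right mult_ac)
  qed simp
qed

(* Sandwiching a matrix unit E_kl gives the tensor of column k of A and row l of B. *)
lemma vtensor_in_sandwich_space:
  fixes A :: "complex^'p^'k" and B :: "complex^'n^'q"
  shows "vtensor (row k (transpose A)) (row l B) \<in> sandwich_space A B"
proof -
  define E :: "complex^'q^'p" where "E = (\<chi> a b. if a = k \<and> b = l then 1 else 0)"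
  have AE: "(A ** E) $ i $ c = (if c = l then A$i$k else 0)" for i c
  proof -
    have "(A ** E) $ i $ c = (\<Sum>a\<in>UNIV. if a = k then (if c = l then A$i$k else 0) else 0)"
      unfolding matrix_matrix_mult_def E_def by (simp only: vec_lambda_beta) (intro sum.cong, auto)
    then show ?thesis by simp
  qed
  have "(A ** E ** B) $ i $ j = A$i$k * B$l$j" for i j
  proof -
    have "(A ** E ** B) $ i $ j = (\<Sum>c\<in>UNIV. if c = l then A$i$k * B$c$j else 0)"
      unfolding matrix_matrix_mult_def[of "A ** E" B] by (simp only: vec_lambda_beta AE) (intro sum.cong, auto)
    then show ?thesis by simp
  qed
  then have "vtensor (row k (transpose A)) (row l B) = flat (A ** E ** B)"
    by (simp add: vec_eq_iff split_paired_all flat_def row_def transpose_def)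
  then show ?thesis unfolding sandwich_space_def by blast
qed

lemma flat_sandwich_expand:
  fixes A :: "complex^'p^'k" and B :: "complex^'n^'q" and Y :: "complex^'q^'p"
  shows "flat (A ** Y ** B) = (\<Sum>k\<in>UNIV. \<Sum>l\<in>UNIV. Y$k$l *s vtensor (row k (transpose A)) (row l B))"
proof -
  have "flat (A ** Y ** B) $ (i,j) = (\<Sum>k\<in>UNIV. \<Sum>l\<in>UNIV. Y$k$l *s vtensor (row k (transpose A)) (row l B)) $ (i,j)"
    for i j
  proof -
    have "flat (A ** Y ** B) $ (i,j) = (\<Sum>l\<in>UNIV. \<Sum>k\<in>UNIV. A$i$k * Y$k$l * B$l$j)"
      by (simp add: flat_def matrix_matrix_mult_def sum_distrib_right)
    also have "\<dots> = (\<Sum>k\<in>UNIV. \<Sum>l\<in>UNIV. Y$k$l * (A$i$k * B$l$j))"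
      by (subst sum.swap) (simp add: mult_ac)
    also have "\<dots> = (\<Sum>k\<in>UNIV. \<Sum>l\<in>UNIV. Y$k$l *s vtensor (row k (transpose A)) (row l B)) $ (i,j)"
      by (simp add: sum_component row_def transpose_def)
    finally show ?thesis .
  qed
  then show ?thesis by (simp add: vec_eq_iff split_paired_all)
qed

(* dim (A M B) = rank A\<^sup>T * rank B: tensors of a basis of the column space of A with a basis
   of the row space of B form a basis of the sandwich space. *)
lemma dim_sandwich_space:
  fixes A :: "complex^'p^'k" and B :: "complex^'n^'q"
  shows "vec.dim (sandwich_space A B) = rank (transpose A) * rank B"
proof -
  obtain BC where BC: "BC \<subseteq> rows (transpose A)" "vec.independent BC"
    "rows (transpose A) \<subseteq> vec.span BC" "card BC = vec.dim (rows (transpose A))"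
    using vec.basis_exists by blast
  obtain BR where BR: "BR \<subseteq> rows B" "vec.independent BR" "rows B \<subseteq> vec.span BR"
    "card BR = vec.dim (rows B)"
    using vec.basis_exists by blast
  have fC: "finite BC" using BC(2) vec.finiteI_independent by blast
  have fR: "finite BR" using BR(2) vec.finiteI_independent by blast
  let ?P = "case_prod vtensor ` (BC \<times> BR)"
  have fX: "finite (BC \<times> BR)" using fC fR by simp
  have inj: "inj_on (case_prod vtensor) (BC \<times> BR)"
    by (rule independent_family_image(1)[OF fX]) (erule vtensor_independent[OF BC(2) BR(2)], assumption)
  have indep: "vec.independent ?P"
    by (rule independent_family_image(2)[OF fX]) (erule vtensor_independent[OF BC(2) BR(2)], assumption)
  have sub: "?P \<subseteq> sandwich_space A B"
  proof
    fix x assume "x \<in> ?P"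
    then obtain u v where x: "x = vtensor u v" "u \<in> BC" "v \<in> BR" by auto
    then obtain k l where "u = row k (transpose A)" "v = row l B"
      using BC(1) BR(1) unfolding rows_def by blast
    then show "x \<in> sandwich_space A B" using x(1) vtensor_in_sandwich_space by simp
  qed
  have span: "sandwich_space A B \<subseteq> vec.span ?P"
  proof
    fix x assume "x \<in> sandwich_space A B"
    then obtain Y where Y: "x = flat (A ** Y ** B)" by (auto simp: sandwich_space_def)
    have "vtensor (row k (transpose A)) (row l B) \<in> vec.span ?P" for k l
      using BC(3) BR(3) vtensor_span[OF fC fR] by (auto simp: rows_def)
    then show "x \<in> vec.span ?P" unfolding Y flat_sandwich_expand
      by (intro vec.span_sum vec.span_scale)
  qed
  have "card ?P = vec.dim (sandwich_space A B)" by (rule vec.basis_card_eq_dim[OF sub span indep])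
  then show ?thesis
    using card_image[OF inj] BC(4) BR(4) by (simp add: card_cartesian_product row_rank_def_gen)
qed

lemma dim_sandwich_space_hermitian:
  "mat_adj A = A \<Longrightarrow> vec.dim (sandwich_space A B) = rank A * rank B"
  by (simp add: dim_sandwich_space rank_transpose_hermitian)


lemma linear_vecI:
  fixes f :: "complex^'k \<Rightarrow> complex^'l"
  assumes "\<And>x y. f (x + y) = f x + f y" "\<And>c x. f (c *s x) = c *s f x"
  shows "Vector_Spaces.linear (*s) (*s) f"
  unfolding Vector_Spaces.linear_iff using assms by (simp add: vec.vector_space_axioms)

lemma dim_add_le_of_embedding:
  fixes f :: "complex^'k \<Rightarrow> complex^'l"
  assumes lin: "Vector_Spaces.linear (*s) (*s) f"
    and V: "vec.subspace V" and W: "vec.subspace W" and U: "vec.subspace U"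
    and fV: "f ` V \<subseteq> U" and WU: "W \<subseteq> U"
    and disjoint: "\<And>x. x \<in> V \<Longrightarrow> f x \<in> W \<Longrightarrow> x = 0"
  shows "vec.dim V + vec.dim W \<le> vec.dim U"
proof -
  have W0: "0 \<in> W" by (rule vec.subspace_0[OF W])
  have inj: "inj_on f V"
  proof (rule inj_onI)
    fix x y assume xy: "x \<in> V" "y \<in> V" "f x = f y"
    then have "x - y \<in> V" "f (x - y) = 0"
      using vec.subspace_diff[OF V] vec.linear_diff[OF lin] by auto
    then show "x = y" using disjoint W0 by force
  qed
  have span: "vec.span V = V" using V by (rule vec.span_eq_iff[THEN iffD2])
  have "vec.dim (f ` vec.span V) = vec.dim (vec.span V)"
    by (rule vec.dim_image_eq[OF lin]) (simp add: span inj)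
  then have dim_fV: "vec.dim (f ` V) = vec.dim V" by (simp only: span)
  have "f ` V \<inter> W \<subseteq> {0}" using disjoint vec.linear_0[OF lin] by auto
  then have dim_Int: "vec.dim (f ` V \<inter> W) = 0" by (simp add: vec.dim_eq_0)
  have "vec.dim {x + y |x y. x \<in> f ` V \<and> y \<in> W} + vec.dim (f ` V \<inter> W) = vec.dim (f ` V) + vec.dim W"
    by (rule vec.dim_sums_Int[OF vec.linear_subspace_image[OF lin V] W])
  moreover have "vec.dim {x + y |x y. x \<in> f ` V \<and> y \<in> W} \<le> vec.dim U"
    using fV WU vec.subspace_add[OF U] by (intro vec.dim_subset) blast
  ultimately show ?thesis using dim_fV dim_Int by linarith
qed

lemma factor_through_kernel:
  fixes Q T :: "complex^'n^'n"
  assumes ker: "\<And>x. Q *v x = 0 \<Longrightarrow> T *v x = 0"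
  shows "\<exists>Z. T = Z ** Q"
proof -
  obtain B where B: "B \<subseteq> range ((*v) Q)" "vec.independent B" "range ((*v) Q) \<subseteq> vec.span B"
    by (rule vec.basis_exists)
  have fB: "finite B" by (rule vec.finiteI_independent[OF B(2)])
  define pre where "pre b = (SOME x. Q *v x = b)" for b
  have pre: "Q *v pre b = b" if "b \<in> B" for b
  proof -
    have "\<exists>x. Q *v x = b" using B(1) that by auto
    then show ?thesis unfolding pre_def by (rule someI_ex)
  qed
  have "\<exists>h. Vector_Spaces.linear (*s) (*s) h \<and> (\<forall>b\<in>B. h b = T *v pre b)"
    by (rule vec.linear_independent_extend[OF B(2)])
  then obtain h where h: "Vector_Spaces.linear (*s) (*s) h" "\<forall>b\<in>B. h b = T *v pre b"
    by blast
  have "h (Q *v x) = T *v x" for x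
  proof -
    have "Q *v x \<in> vec.span B" by (rule subsetD[OF B(3) rangeI])
    then obtain c where c: "Q *v x = (\<Sum>b\<in>B. c b *s b)" using vec.span_finite[OF fB] by blast
    define y where "y = (\<Sum>b\<in>B. c b *s pre b)"
    have "Q *v y = Q *v x"
      unfolding y_def c by (simp add: vec.linear_sum[OF matrix_vector_mul_linear_gen] matrix_vector_mult_scale pre)
    then have "Q *v (x - y) = 0" by (simp add: matrix_vector_mult_diff_distrib)
    then have "T *v (x - y) = 0" by (rule ker)
    then have Tx: "T *v x = T *v y" by (simp add: matrix_vector_mult_diff_distrib)
    have "h (Q *v x) = (\<Sum>b\<in>B. c b *s h b)"
      unfolding c by (simp add: vec.linear_sum[OF h(1)] vec.linear_scale[OF h(1)])
    also have "\<dots> = T *v y"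
      unfolding y_def by (simp add: vec.linear_sum[OF matrix_vector_mul_linear_gen] matrix_vector_mult_scale h(2))
    finally show ?thesis using Tx by simp
  qed
  then have "T = matrix h ** Q"
    unfolding matrix_eq by (simp add: matrix_vector_mul_assoc[symmetric] matrix_works[OF h(1)])
  then show ?thesis by blast
qed

lemma sandwich_space_mono:
  fixes Q T :: "complex^'n^'n"
  assumes herm: "mat_adj T = T" "mat_adj Q = Q"
    and ker: "\<And>x. Q *v x = 0 \<Longrightarrow> T *v x = 0"
  shows "sandwich_space T T \<subseteq> sandwich_space Q Q"
proof
  fix x assume "x \<in> sandwich_space T T"
  then obtain Y where x: "x = flat (T ** Y ** T)" by (auto simp: sandwich_space_def)
  obtain Z where Z: "T = Z ** Q" using factor_through_kernel[OF ker] by blast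
  have "T = mat_adj (Z ** Q)" using herm(1) Z by simp
  then have Z': "T = Q ** mat_adj Z" using herm(2) by (simp add: mat_adj_mult)
  have "T ** Y ** T = (Q ** mat_adj Z) ** Y ** (Z ** Q)"
    by (rule arg_cong2[where f = "\<lambda>A B. A ** Y ** B"]) (fact Z', fact Z)
  then have "x = flat (Q ** (mat_adj Z ** Y ** Z) ** Q)" unfolding x by (simp add: matrix_mul_assoc)
  then show "x \<in> sandwich_space Q Q" unfolding sandwich_space_def by blast
qed

definition flat_trace :: "complex^('a::finite \<times> 'a) \<Rightarrow> complex" where
  "flat_trace z = (\<Sum>a\<in>UNIV. z$(a,a))"

lemma subspace_traceless: "vec.subspace {z :: complex^('a::finite \<times> 'a). flat_trace z = 0}"
  unfolding vec.subspace_def flat_trace_def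
  by (auto simp: sum.distrib sum_distrib_left[symmetric])

lemma dim_traceless: "CARD('a::finite \<times> 'a) \<le> vec.dim {z :: complex^('a \<times> 'a). flat_trace z = 0} + 1"
proof -
  obtain a0 :: 'a where True by blast
  define e :: "complex^('a \<times> 'a)" where "e = axis (a0,a0) 1"
  have trace_e: "flat_trace e = 1"
  proof -
    have "flat_trace e = (\<Sum>a\<in>UNIV. if a = a0 then 1 else 0)"
      unfolding flat_trace_def e_def by (rule sum.cong) (auto simp: axis_def)
    then show ?thesis by simp
  qed
  let ?H = "{z :: complex^('a \<times> 'a). flat_trace z = 0}"
  have "z \<in> {x + y |x y. x \<in> ?H \<and> y \<in> vec.span {e}}" for z
  proof -
    have "flat_trace (z - flat_trace z *s e) = 0"
      using trace_e by (simp add: flat_trace_def sum_subtractf sum_distrib_left[symmetric])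
    moreover have "flat_trace z *s e \<in> vec.span {e}" by (intro vec.span_scale vec.span_base) simp
    ultimately show ?thesis by (intro CollectI exI[of _ "z - flat_trace z *s e"] exI[of _ "flat_trace z *s e"]) auto
  qed
  then have sums: "{x + y |x y. x \<in> ?H \<and> y \<in> vec.span {e}} = UNIV" by auto
  have "vec.dim (UNIV :: (complex^('a \<times> 'a)) set) + vec.dim (?H \<inter> vec.span {e})
      = vec.dim ?H + vec.dim (vec.span {e})"
    using vec.dim_sums_Int[OF subspace_traceless vec.subspace_span[of "{e}"]] unfolding sums .
  moreover have "vec.dim (vec.span {e}) \<le> 1" by (simp add: vec.dim_span)
  moreover have "vec.dim (UNIV :: (complex^('a \<times> 'a)) set) = CARD('a \<times> 'a)" by (rule vec_dim_card)
  ultimately show ?thesis by linarith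
qed

lemma dim_traceless_part:
  fixes Z :: "(complex^('a::finite \<times> 'a)) set"
  assumes Z: "vec.subspace Z"
  shows "vec.dim Z \<le> vec.dim (Z \<inter> {z. flat_trace z = 0}) + 1"
proof -
  have "vec.dim {x + y |x y. x \<in> Z \<and> y \<in> {z. flat_trace z = 0}} \<le> CARD('a \<times> 'a)"
    by (rule dim_subset_UNIV_cart_gen)
  then show ?thesis
    using vec.dim_sums_Int[OF Z subspace_traceless] dim_traceless[where 'a = 'a] by linarith
qed

(* rank (I \<otimes> \<rho>) \<le> d_2 rank \<rho>: every row of I \<otimes> \<rho> is a row of \<rho> placed in one block. *)
lemma rank_id_tensor_le:
  fixes \<rho> :: "complex^'a::finite^'a"
  shows "rank (id_tensor \<rho> :: complex^('b::finite \<times> 'a)^('b \<times> 'a)) \<le> CARD('b) * rank \<rho>"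
proof -
  define place :: "'b \<Rightarrow> complex^'a \<Rightarrow> complex^('b \<times> 'a)"
    where "place b v = (\<chi> p. if fst p = b then v$(snd p) else 0)" for b v
  obtain BR where BR: "BR \<subseteq> rows \<rho>" "vec.independent BR" "rows \<rho> \<subseteq> vec.span BR"
    "card BR = vec.dim (rows \<rho>)"
    by (rule vec.basis_exists)
  have fR: "finite BR" by (rule vec.finiteI_independent[OF BR(2)])
  let ?P = "\<Union>b\<in>(UNIV::'b set). place b ` BR"
  have "rows (id_tensor \<rho> :: complex^('b \<times> 'a)^('b \<times> 'a)) \<subseteq> vec.span ?P"
  proof
    fix r assume "r \<in> rows (id_tensor \<rho> :: complex^('b \<times> 'a)^('b \<times> 'a))"
    then obtain b a where "r = row (b,a) (id_tensor \<rho> :: complex^('b \<times> 'a)^('b \<times> 'a))"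
      by (auto simp: rows_def)
    then have r: "r = place b (row a \<rho>)"
      by (simp add: row_def id_tensor_def place_def vec_eq_iff)
    have "row a \<rho> \<in> vec.span BR" using BR(3) by (auto simp: rows_def)
    then obtain u where u: "row a \<rho> = (\<Sum>x\<in>BR. u x *s x)" using vec.span_finite[OF fR] by blast
    have "place b (\<Sum>x\<in>BR. u x *s x) = (\<Sum>x\<in>BR. u x *s place b x)"
      by (simp add: place_def vec_eq_iff sum_component if_distrib cong: if_cong)
    also have "\<dots> \<in> vec.span ?P"
      by (intro vec.span_sum vec.span_scale vec.span_base) auto
    finally show "r \<in> vec.span ?P" unfolding r u .
  qed
  then have "rank (id_tensor \<rho> :: complex^('b \<times> 'a)^('b \<times> 'a)) \<le> card ?P"
    unfolding row_rank_def_gen by (rule vec.dim_le_card) (use fR in simp)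
  also have "\<dots> \<le> (\<Sum>b\<in>(UNIV::'b set). card (place b ` BR))" by (rule card_UN_le) simp
  also have "\<dots> \<le> (\<Sum>b\<in>(UNIV::'b set). card BR)" by (intro sum_mono card_image_le fR)
  also have "\<dots> = CARD('b) * rank \<rho>" using BR(4) by (simp add: row_rank_def_gen)
  finally show ?thesis .
qed

lemma rank_ge_1: "A \<noteq> 0 \<Longrightarrow> 1 \<le> rank (A :: 'a::field^'n^'m)"
proof (rule ccontr)
  assume "A \<noteq> 0" "\<not> 1 \<le> rank A"
  then have "vec.dim (rows A) = 0" unfolding row_rank_def_gen by linarith
  then have "rows A \<subseteq> {0}" by (simp only: vec.dim_eq_0)
  then have "row r A = 0" for r unfolding rows_def by blast
  then have "A $ r $ c = 0" for r c by (simp add: row_def vec_eq_iff)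
  then have "A = 0" by (simp add: vec_eq_iff)
  with \<open>A \<noteq> 0\<close> show False ..
qed


section \<open>Families of sandwiches and the dimension count\<close>

(* A vector indexed by 'm \<times> 'k is a family of 'm blocks, each indexed by 'k. *)
definition block :: "'m::finite \<Rightarrow> complex^('m \<times> 'k) \<Rightarrow> complex^'k" where
  "block i x = (\<chi> p. x$(i,p))"

definition block_embed :: "'m::finite \<Rightarrow> complex^'k \<Rightarrow> complex^('m \<times> 'k)" where
  "block_embed i z = (\<chi> q. if fst q = i then z$(snd q) else 0)"

definition block_sum :: "complex^('m::finite \<times> 'k) \<Rightarrow> complex^'k" where
  "block_sum x = (\<Sum>i\<in>UNIV. block i x)"

lemma block_block_embed: "block j (block_embed i z) = (if j = i then z else 0)"
  by (simp add: block_def block_embed_def vec_eq_iff)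

lemma block_zero [simp]: "block i 0 = 0"
  and block_add [simp]: "block i (x + y) = block i x + block i y"
  and block_scale [simp]: "block i (c *s x) = c *s block i x"
  by (simp_all add: block_def vec_eq_iff)

lemma linear_block_sum: "Vector_Spaces.linear (*s) (*s) (block_sum :: complex^('m::finite \<times> 'k::finite) \<Rightarrow> _)"
  by (rule linear_vecI)
    (simp_all add: block_sum_def block_def vec_eq_iff sum_component sum.distrib sum_distrib_left)

lemma subspace_blocks:
  assumes "\<And>i. vec.subspace (S i)"
  shows "vec.subspace {x. \<forall>i. block i x \<in> S i}"
  using assms unfolding vec.subspace_def by auto

(* The direct sum of subspaces S_i has dimension \<Sum>i dim S_i: embedded bases of the blocks
   stay independent. *)
lemma dim_blocks:
  fixes S :: "'m::finite \<Rightarrow> (complex^'k) set"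
  assumes sub: "\<And>i. vec.subspace (S i)"
  shows "(\<Sum>i\<in>UNIV. vec.dim (S i)) \<le> vec.dim {x. \<forall>i. block i x \<in> S i}"
proof -
  have "\<exists>B. B \<subseteq> S i \<and> vec.independent B \<and> card B = vec.dim (S i)" for i
    using vec.basis_exists[of "S i"] by metis
  then obtain Bs where Bs: "\<And>i. Bs i \<subseteq> S i" "\<And>i. vec.independent (Bs i)"
    "\<And>i. card (Bs i) = vec.dim (S i)" by metis
  have fB: "\<And>i. finite (Bs i)" using Bs(2) vec.finiteI_independent by blast
  define X where "X = Sigma (UNIV::'m set) Bs"
  have fX: "finite X" unfolding X_def using fB by simp
  define g where "g p = block_embed (fst p) (snd p)" for p :: "'m \<times> (complex^'k)"
  have ind: "c p = 0" if z: "(\<Sum>q\<in>X. c q *s g q) = 0" and p: "p \<in> X" for c p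
  proof -
    obtain j b where jb: "p = (j,b)" "b \<in> Bs j" using p unfolding X_def by blast
    have "block j (\<Sum>q\<in>X. c q *s g q) = (\<Sum>q\<in>X. c q *s block j (g q))"
      by (simp add: block_def vec_eq_iff sum_component)
    also have "\<dots> = (\<Sum>i\<in>UNIV. \<Sum>b\<in>Bs i. c (i,b) *s (if j = i then b else 0))"
      unfolding X_def g_def using fB by (simp add: sum.Sigma block_block_embed split_def)
    also have "\<dots> = (\<Sum>i\<in>UNIV. if i = j then (\<Sum>b\<in>Bs j. c (j,b) *s b) else 0)"
      by (rule sum.cong) auto
    finally have "(\<Sum>b\<in>Bs j. c (j,b) *s b) = 0" using z by (simp add: block_def vec_eq_iff)
    then show ?thesis using independent_sum_zero[OF Bs(2) _ jb(2), of "\<lambda>b. c (j,b)"] jb(1) by simp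
  qed
  have inj: "inj_on g X"
    by (rule independent_family_image(1)[OF fX]) (erule ind, assumption)
  have indep: "vec.independent (g ` X)"
    by (rule independent_family_image(2)[OF fX]) (erule ind, assumption)
  have "g ` X \<subseteq> {x. \<forall>i. block i x \<in> S i}"
    using Bs(1) vec.subspace_0[OF sub] by (auto simp: X_def g_def block_block_embed) blast
  then have "card (g ` X) \<le> vec.dim {x. \<forall>i. block i x \<in> S i}"
    using indep by (rule vec.independent_card_le_dim)
  moreover have "card (g ` X) = (\<Sum>i\<in>UNIV. vec.dim (S i))"
    using card_image[OF inj] fB Bs(3) by (simp add: X_def)
  ultimately show ?thesis by simp
qed

definition id_tensor_flat :: "complex^('a::finite \<times> 'a) \<Rightarrow> complex^(('b::finite \<times> 'a) \<times> ('b \<times> 'a))" where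
  "id_tensor_flat z = flat (id_tensor (unflat z))"

lemma linear_id_tensor_flat:
  "Vector_Spaces.linear (*s) (*s) (id_tensor_flat :: complex^('a::finite \<times> 'a) \<Rightarrow> complex^(('b::finite \<times> 'a) \<times> ('b \<times> 'a)))"
  by (rule linear_vecI) (simp_all add: id_tensor_flat_def flat_def id_tensor_def unflat_def vec_eq_iff algebra_simps)

lemma inj_id_tensor_flat:
  "inj (id_tensor_flat :: complex^('a::finite \<times> 'a) \<Rightarrow> complex^(('b::finite \<times> 'a) \<times> ('b \<times> 'a)))"
proof (rule injI)
  fix z z' :: "complex^('a \<times> 'a)"
  assume eq: "(id_tensor_flat z :: complex^(('b \<times> 'a) \<times> ('b \<times> 'a))) = id_tensor_flat z'"
  obtain b :: 'b where True by blast
  have "z$(a,a') = z'$(a,a')" for a a'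
    using arg_cong[OF eq, of "\<lambda>w. w $ ((b,a),(b,a'))"]
    by (simp add: id_tensor_flat_def flat_def id_tensor_def unflat_def)
  then show "z = z'" by (simp add: vec_eq_iff split_paired_all)
qed

lemma extreme_tester_sandwich_family_zero:
  fixes T :: "complex^('b::finite \<times> 'a::finite)^('b \<times> 'a)^'m::finite"
    and \<rho> :: "complex^'a^'a"
    and x :: "complex^('m \<times> (('b \<times> 'a) \<times> ('b \<times> 'a)))"
  assumes tester: "is_tester T \<rho>"
    and ext: "T extreme_point_of testers"
    and blocks: "\<And>i. block i x \<in> sandwich_space (T$i) (T$i)"
    and sum: "block_sum x = id_tensor_flat z"
    and trace: "flat_trace z = 0"
  shows "x = 0"
proof -
  define D where "D = (\<chi> i. (unflat (block i x) :: complex^('b \<times> 'a)^('b \<times> 'a)))"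
  have "D = 0"
  proof (rule extreme_tester_rigid[OF tester ext])
    show "\<exists>Y. D$i = T$i ** Y ** T$i" for i
      using blocks[of i] by (auto simp: D_def sandwich_space_def)
    have "(\<Sum>i\<in>UNIV. D$i) = unflat (block_sum x)" by (simp add: D_def block_sum_def unflat_sum)
    then show "(\<Sum>i\<in>UNIV. D$i) = id_tensor (unflat z)" by (simp add: sum id_tensor_flat_def)
    show "(\<Sum>a\<in>UNIV. unflat z $ a $ a) = 0"
      using trace by (simp add: flat_trace_def unflat_def)
  qed
  moreover have "block i x = flat (D$i)" for i by (simp add: D_def)
  ultimately have "block i x = 0" for i by simp
  then show "x = 0" by (simp add: vec_eq_iff block_def split_paired_all)
qed

(* Each T_i vanishes on the kernel of Q = I \<otimes> \<rho> = \<Sum>i T_i, so its sandwiches are sandwiches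
   of Q. *)
lemma tester_sandwich_space_le:
  fixes T :: "complex^('b::finite \<times> 'a::finite)^('b \<times> 'a)^'m::finite"
    and \<rho> :: "complex^'a^'a"
  assumes "is_tester T \<rho>"
  shows "sandwich_space (T$i) (T$i) \<subseteq> sandwich_space (id_tensor \<rho>) (id_tensor \<rho>)"
proof -
  have psdT: "\<And>i. psd (T$i)" and sumT: "(\<Sum>i\<in>UNIV. T$i) = id_tensor \<rho>"
    using assms by (auto simp: is_tester_def)
  have hermQ: "mat_adj (id_tensor \<rho> :: complex^('b \<times> 'a)^('b \<times> 'a)) = id_tensor \<rho>"
    unfolding sumT[symmetric] by (intro psd_hermitian psd_sum psdT)
  show ?thesis
    by (rule sandwich_space_mono[OF psd_hermitian[OF psdT] hermQ]) (use psd_sum_kernel[OF psdT] sumT in auto)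
qed

lemma id_tensor_flat_sandwich_space:
  fixes \<rho> :: "complex^'a::finite^'a"
  shows "id_tensor_flat ` sandwich_space \<rho> \<rho>
     \<subseteq> sandwich_space (id_tensor \<rho> :: complex^('b::finite \<times> 'a::finite)^('b \<times> 'a)) (id_tensor \<rho>)"
proof
  fix w :: "complex^(('b \<times> 'a) \<times> ('b \<times> 'a))"
  assume "w \<in> id_tensor_flat ` sandwich_space \<rho> \<rho>"
  then obtain Y where "w = id_tensor_flat (flat (\<rho> ** Y ** \<rho>))" by (auto simp: sandwich_space_def)
  then have "w = flat (id_tensor \<rho> ** id_tensor Y ** (id_tensor \<rho> :: complex^('b \<times> 'a)^('b \<times> 'a)))"
    by (simp add: id_tensor_flat_def id_tensor_mult)
  then show "w \<in> sandwich_space (id_tensor \<rho>) (id_tensor \<rho>)" by (auto simp: sandwich_space_def)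
qed

lemma dim_traceless_sandwich_lift:
  fixes \<rho> :: "complex^'a::finite^'a"
  assumes "mat_adj \<rho> = \<rho>"
  shows "rank \<rho> * rank \<rho> \<le> vec.dim (id_tensor_flat ` (sandwich_space \<rho> \<rho> \<inter> {z. flat_trace z = 0})
           :: (complex^(('b::finite \<times> 'a) \<times> ('b \<times> 'a))) set) + 1"
proof -
  have "vec.dim (id_tensor_flat ` (sandwich_space \<rho> \<rho> \<inter> {z. flat_trace z = 0})
          :: (complex^(('b \<times> 'a) \<times> ('b \<times> 'a))) set)
      = vec.dim (sandwich_space \<rho> \<rho> \<inter> {z. flat_trace z = 0})"
    by (rule vec.dim_image_eq[OF linear_id_tensor_flat inj_on_subset[OF inj_id_tensor_flat]]) simp
  then show ?thesis
    using dim_traceless_part[OF subspace_sandwich_space[of \<rho> \<rho>]]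
    by (simp add: dim_sandwich_space_hermitian assms)
qed

(* The dimension count: the direct sum V of the sandwich spaces of the T_i and the space W
   of the previous lemma embed disjointly into the sandwich space U of Q = I \<otimes> \<rho>. *)
lemma extreme_tester_dimension_count:
  fixes T :: "complex^('b::finite \<times> 'a::finite)^('b \<times> 'a)^'m::finite"
    and \<rho> :: "complex^'a^'a"
  assumes tester: "is_tester T \<rho>"
    and ext: "T extreme_point_of testers"
  shows "(\<Sum>i\<in>UNIV. rank (T$i) * rank (T$i)) + rank \<rho> * rank \<rho>
           \<le> rank (id_tensor \<rho> :: complex^('b \<times> 'a)^('b \<times> 'a)) * rank (id_tensor \<rho> :: complex^('b \<times> 'a)^('b \<times> 'a)) + 1"
proof -
  define Q where "Q = (id_tensor \<rho> :: complex^('b \<times> 'a)^('b \<times> 'a))"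
  have psdT: "\<And>i. psd (T$i)" and dens: "density \<rho>" and sumT: "(\<Sum>i\<in>UNIV. T$i) = Q"
    using tester by (auto simp: is_tester_def Q_def)
  have hermQ: "mat_adj Q = Q" unfolding sumT[symmetric] by (intro psd_hermitian psd_sum psdT)
  define S where "S i = sandwich_space (T$i) (T$i)" for i
  define V where "V = {x :: complex^('m \<times> (('b \<times> 'a) \<times> ('b \<times> 'a))). \<forall>i. block i x \<in> S i}"
  define U where "U = sandwich_space Q Q"
  define Z where "Z = sandwich_space \<rho> \<rho> \<inter> {z. flat_trace z = 0}"
  define W where "W = (id_tensor_flat ` Z :: (complex^(('b \<times> 'a) \<times> ('b \<times> 'a))) set)"
  have subS: "\<And>i. vec.subspace (S i)" unfolding S_def by (rule subspace_sandwich_space)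
  have subU: "vec.subspace U" unfolding U_def by (rule subspace_sandwich_space)
  have subZ: "vec.subspace Z"
    unfolding Z_def by (intro vec.subspace_inter subspace_sandwich_space subspace_traceless)
  have SU: "S i \<subseteq> U" for i
    unfolding S_def U_def Q_def by (rule tester_sandwich_space_le[OF tester])
  have "vec.dim V + vec.dim W \<le> vec.dim U"
  proof (rule dim_add_le_of_embedding[OF linear_block_sum])
    show "vec.subspace V" unfolding V_def by (rule subspace_blocks[OF subS])
    show "vec.subspace W" unfolding W_def by (rule vec.linear_subspace_image[OF linear_id_tensor_flat subZ])
    show "vec.subspace U" by (rule subU)
    show "block_sum ` V \<subseteq> U"
      using SU unfolding V_def block_sum_def by (auto intro!: vec.subspace_sum[OF subU])
    show "W \<subseteq> U"
      using id_tensor_flat_sandwich_space unfolding W_def Z_def U_def Q_def by blast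
    show "x = 0" if "x \<in> V" "block_sum x \<in> W" for x
      using that extreme_tester_sandwich_family_zero[OF tester ext]
      by (auto simp: V_def S_def W_def Z_def)
  qed
  moreover have "(\<Sum>i\<in>UNIV. rank (T$i) * rank (T$i)) \<le> vec.dim V"
    using dim_blocks[OF subS] by (simp add: V_def S_def dim_sandwich_space_hermitian psd_hermitian psdT)
  moreover have "rank \<rho> * rank \<rho> \<le> vec.dim W + 1"
    using dens unfolding W_def Z_def by (intro dim_traceless_sandwich_lift) (simp add: density_def psd_hermitian)
  moreover have "vec.dim U = rank Q * rank Q"
    by (simp add: U_def dim_sandwich_space_hermitian hermQ)
  ultimately show ?thesis unfolding Q_def by linarith
qed

(* First claim of the theorem, using rank (I \<otimes> \<rho>) \<le> d_2 rank \<rho>. *)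
lemma extreme_tester_rank_bound:
  fixes T :: "complex^('b::finite \<times> 'a::finite)^('b \<times> 'a)^'m::finite"
    and \<rho> :: "complex^'a^'a"
  assumes "is_tester T \<rho>" "T extreme_point_of testers"
  shows "(\<Sum>i\<in>UNIV. int (rank (T$i))^2) + int (rank \<rho>)^2 - 1 \<le> (int (rank \<rho>) * int CARD('b))^2"
proof -
  let ?Q = "id_tensor \<rho> :: complex^('b \<times> 'a)^('b \<times> 'a)"
  have "rank ?Q * rank ?Q \<le> (rank \<rho> * CARD('b)) * (rank \<rho> * CARD('b))"
    using mult_le_mono[OF rank_id_tensor_le rank_id_tensor_le] by (simp add: mult.commute)
  then have "(\<Sum>i\<in>UNIV. rank (T$i) * rank (T$i)) + rank \<rho> * rank \<rho>
      \<le> (rank \<rho> * CARD('b)) * (rank \<rho> * CARD('b)) + 1"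
    using extreme_tester_dimension_count[OF assms] by linarith
  then have "int ((\<Sum>i\<in>UNIV. rank (T$i) * rank (T$i)) + rank \<rho> * rank \<rho>)
      \<le> int ((rank \<rho> * CARD('b)) * (rank \<rho> * CARD('b)) + 1)"
    by linarith
  then show ?thesis by (simp add: power2_eq_square of_nat_sum)
qed

lemma outcome_count_bound:
  fixes r :: "'m::finite \<Rightarrow> nat" and s d1 d2 :: nat
  assumes bound: "(\<Sum>i\<in>UNIV. int (r i)^2) + int s^2 - 1 \<le> (int s * int d2)^2"
    and pos: "\<And>i. 1 \<le> r i" and s: "s \<le> d1" and d2: "1 \<le> d2"
  shows "int CARD('m) \<le> int d1^2 * (int d2^2 - 1) + 1"
proof -
  have "int CARD('m) = (\<Sum>i\<in>(UNIV::'m set). 1)" by simp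
  also have "\<dots> \<le> (\<Sum>i\<in>UNIV. int (r i)^2)"
  proof (rule sum_mono)
    fix i
    have "1 \<le> int (r i)" using pos[of i] by simp
    then show "1 \<le> int (r i)^2" by (simp add: one_le_power)
  qed
  also have "\<dots> \<le> int s^2 * (int d2^2 - 1) + 1"
    using bound by (simp add: algebra_simps power_mult_distrib)
  also have "\<dots> \<le> int d1^2 * (int d2^2 - 1) + 1"
    using s d2 by (intro add_right_mono mult_right_mono power_mono) simp_all
  finally show ?thesis .
qed

theorem mainTheorem5:
  fixes T :: "complex^('b::finite \<times> 'a::finite)^('b \<times> 'a)^'m::finite"
    and \<rho> :: "complex^'a^'a"
  assumes "is_tester T \<rho>"
    and "T extreme_point_of testers"
  shows "((\<Sum>i\<in>UNIV. int (rank (T$i))^2) + int (rank \<rho>)^2 - 1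
           \<le> (int (rank \<rho>) * int CARD('b))^2) \<and>
         ((\<forall>i. T$i \<noteq> 0) \<longrightarrow>
           int CARD('m) \<le> int CARD('a)^2 * (int CARD('b)^2 - 1) + 1)"
proof -
  have bound: "(\<Sum>i\<in>UNIV. int (rank (T$i))^2) + int (rank \<rho>)^2 - 1 \<le> (int (rank \<rho>) * int CARD('b))^2"
    by (rule extreme_tester_rank_bound[OF assms])
  moreover have "int CARD('m) \<le> int CARD('a)^2 * (int CARD('b)^2 - 1) + 1" if "\<forall>i. T$i \<noteq> 0"
  proof (rule outcome_count_bound[OF bound])
    show "1 \<le> rank (T$i)" for i using rank_ge_1 that by blast
    show "rank \<rho> \<le> CARD('a)" unfolding row_rank_def_gen by (rule dim_subset_UNIV_cart_gen)
    show "1 \<le> CARD('b)" by (simp add: Suc_le_eq)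
  qed
  ultimately show ?thesis by blast
qed

end
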